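(* Let $Y,Z$ be finite-dimensional real or complex vector spaces, $f$ a vector field on $Y$, $F\colon Y\to Z$ quadratic, and $g,\gamma$ vector fields on $Z$ with $F'(y)f(y)=g(F(y))$ and $F''(f(y),f(y))=\gamma(F(y))$ for all $y\in Y$. Let nonzero $b_1,\dots,b_s$ and $h>0$ be given, and let $z_0,z_1,Z_1,\dots,Z_s\in Z$ satisfy \[ Z_i = z_0 + h\sum_{j=1}^{i-1} b_j g(Z_j) + \frac h2 b_i g(Z_i) - \frac{h^2}{8} b_i^2\gamma(Z_i)\ (i=1,\dots,s),\qquad z_1 = z_0 + h\sum_{i=1}^s b_i g(Z_i). \] If $G$ is a quadratic map on $Z$ (into some finite-dimensional vector space), then \[ G(z_1) = G(z_0) + h\sum_{i=1}^s b_i G'(Z_i)g(Z_i) + \frac{h^3}{8}\sum_{i=1}^s b_i^3 G''\bigl(g(Z_i),\gamma(Z_i)\bigr). \]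
   Context: A map $F$ on a vector space is quadratic if for every base point $y_0$, $F(y)=F(y_0)+F'(y_0)(y-y_0)+\tfrac12F''(y-y_0,y-y_0)$ for all $y$, with $F''$ a constant symmetric bilinear map. *)

theory Defs
  imports "HOL-Analysis.Analysis"
begin

definition quadratic_map ::
  "('a::real_vector \<Rightarrow> 'b::real_vector) \<Rightarrow> ('a \<Rightarrow> 'a \<Rightarrow> 'b) \<Rightarrow> ('a \<Rightarrow> 'a \<Rightarrow> 'b) \<Rightarrow> bool"
where
  "quadratic_map F F' F'' \<longleftrightarrow>
     bilinear F'' \<and> (\<forall>u v. F'' u v = F'' v u) \<and> (\<forall>y0. linear (F' y0)) \<and>
     (\<forall>y0 y. F y = F y0 + F' y0 (y - y0) + (1/2) *\<^sub>R F'' (y - y0) (y - y0))"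

end

theory Submission
  imports Defs
begin

text \<open>Put y_i = z0 + h (b_1 g(Z_1) + ... + b_{i-1} g(Z_{i-1})). Then y_{i+1} = y_i + k_i with
k_i = h b_i g(Z_i), and the stage equation says Z_i = y_i + k_i/2 - c_i with
c_i = h^2 b_i^2 \<gamma>(Z_i)/8. Expanding the quadratic map G exactly about Z_i at both ends
of the step and subtracting, polarization of the symmetric bilinear G'' leaves
G(y_{i+1}) - G(y_i) = G'(Z_i) k_i + G''(k_i, c_i); summing over the stages telescopes.\<close>

lemma bilinear_symmetric_polarization:
  assumes "bilinear B" and "B u v = B v u"
  shows "B (v + u) (v + u) - B (v - u) (v - u) = 4 *\<^sub>R B u v"
proof -
  have "B (v + u) (v + u) - B (v - u) (v - u) = 2 *\<^sub>R (B u v + B v u)"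
    using assms(1) by (simp add: bilinear_ladd bilinear_radd bilinear_lsub bilinear_rsub
      algebra_simps flip: scaleR_2)
  then show ?thesis
    using assms(2) by (simp flip: scaleR_2)
qed

lemma quadratic_map_increment:
  assumes "quadratic_map G G' G''"
  shows "G (y + k) - G y = G' (y + (1/2) *\<^sub>R k - c) k + G'' k c"
proof -
  define Z where "Z = y + (1/2) *\<^sub>R k - c"
  define u where "u = (1/2) *\<^sub>R k"
  have bl: "bilinear G''" and sym: "G'' u c = G'' c u" and lin: "linear (G' Z)"
    and expand: "\<And>q. G q = G Z + G' Z (q - Z) + (1/2) *\<^sub>R G'' (q - Z) (q - Z)"
    using assms unfolding quadratic_map_def by auto
  have k: "k = u + u"
    unfolding u_def by (simp flip: scaleR_add_left)
  have Z: "Z = y + u - c"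
    unfolding Z_def u_def ..
  have "G (y + k) - G y
      = G' Z (c + u) - G' Z (c - u) + (1/2) *\<^sub>R (G'' (c + u) (c + u) - G'' (c - u) (c - u))"
    using expand[of "y + k"] expand[of y] unfolding k Z by (simp add: algebra_simps)
  also have "\<dots> = G' Z k + G'' k c"
    using bilinear_symmetric_polarization[OF bl sym] bl lin k
    by (simp add: bilinear_ladd bilinear_lmul linear_add linear_diff linear_scale flip: scaleR_2)
  finally show ?thesis
    unfolding Z_def .
qed

lemma quadratic_map_stage_increment:
  assumes "quadratic_map G G' G''"
    and "Z = y + (h / 2 * \<beta>) *\<^sub>R v - (h^2 / 8 * \<beta>^2) *\<^sub>R w"
  shows "G (y + (h * \<beta>) *\<^sub>R v) - G y
           = h *\<^sub>R (\<beta> *\<^sub>R G' Z v) + (h^3 / 8) *\<^sub>R (\<beta>^3 *\<^sub>R G'' v w)"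
proof -
  have bl: "bilinear G''" and lin: "linear (G' Z)"
    using assms(1) unfolding quadratic_map_def by auto
  have "G (y + (h * \<beta>) *\<^sub>R v) - G y
      = G' Z ((h * \<beta>) *\<^sub>R v) + G'' ((h * \<beta>) *\<^sub>R v) ((h^2 / 8 * \<beta>^2) *\<^sub>R w)"
    using quadratic_map_increment[OF assms(1), of y "(h * \<beta>) *\<^sub>R v" "(h^2 / 8 * \<beta>^2) *\<^sub>R w"]
      assms(2) by (simp add: mult_ac)
  then show ?thesis
    using lin bl
    by (simp add: linear_scale bilinear_lmul bilinear_rmul power2_eq_square power3_eq_cube
        mult_ac)
qed

theorem theorem2p10:
  fixes f :: "'y::euclidean_space \<Rightarrow> 'y"
    and F :: "'y \<Rightarrow> 'z::euclidean_space" and F' :: "'y \<Rightarrow> 'y \<Rightarrow> 'z" and F'' :: "'y \<Rightarrow> 'y \<Rightarrow> 'z"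
    and g :: "'z \<Rightarrow> 'z" and \<gamma> :: "'z \<Rightarrow> 'z"
    and G :: "'z \<Rightarrow> 'w::euclidean_space" and G' :: "'z \<Rightarrow> 'z \<Rightarrow> 'w" and G'' :: "'z \<Rightarrow> 'z \<Rightarrow> 'w"
    and b :: "nat \<Rightarrow> real" and h :: real and s :: nat
    and z0 z1 :: 'z and Zs :: "nat \<Rightarrow> 'z"
  assumes F_quad: "quadratic_map F F' F''"
    and Fg: "\<And>y. F' y (f y) = g (F y)"
    and Fgamma: "\<And>y. F'' (f y) (f y) = \<gamma> (F y)"
    and b_nz: "\<And>i. i \<in> {1..s} \<Longrightarrow> b i \<noteq> 0"
    and h_pos: "h > 0"
    and stages: "\<And>i. i \<in> {1..s} \<Longrightarrow>
        Zs i = z0 + h *\<^sub>R (\<Sum>j = 1..<i. b j *\<^sub>R g (Zs j))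
                  + (h / 2 * b i) *\<^sub>R g (Zs i) - (h^2 / 8 * (b i)^2) *\<^sub>R \<gamma> (Zs i)"
    and step: "z1 = z0 + h *\<^sub>R (\<Sum>i = 1..s. b i *\<^sub>R g (Zs i))"
    and G_quad: "quadratic_map G G' G''"
  shows "G z1 = G z0 + h *\<^sub>R (\<Sum>i = 1..s. b i *\<^sub>R G' (Zs i) (g (Zs i)))
                + (h^3 / 8) *\<^sub>R (\<Sum>i = 1..s. (b i)^3 *\<^sub>R G'' (g (Zs i)) (\<gamma> (Zs i)))"
proof -
  define y where "y n = z0 + h *\<^sub>R (\<Sum>j = 1..<n. b j *\<^sub>R g (Zs j))" for n
  have increment: "G (y (Suc i)) - G (y i)
      = h *\<^sub>R (b i *\<^sub>R G' (Zs i) (g (Zs i))) + (h^3 / 8) *\<^sub>R ((b i)^3 *\<^sub>R G'' (g (Zs i)) (\<gamma> (Zs i)))"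
    if i: "i \<in> {1..s}" for i
  proof -
    have "y (Suc i) = y i + (h * b i) *\<^sub>R g (Zs i)"
      using i by (simp add: y_def scaleR_add_right)
    moreover have "Zs i = y i + (h / 2 * b i) *\<^sub>R g (Zs i) - (h^2 / 8 * (b i)^2) *\<^sub>R \<gamma> (Zs i)"
      using stages[OF i] by (simp add: y_def)
    ultimately show ?thesis
      using quadratic_map_stage_increment[OF G_quad, of "Zs i" "y i" h "b i"] by simp
  qed
  have "G z1 - G z0 = (\<Sum>i = 1..s. G (y (Suc i)) - G (y i))"
    using sum_Suc_diff[of 1 s "\<lambda>i. G (y i)"]
    by (simp add: y_def step atLeastLessThanSuc_atLeastAtMost)
  also have "\<dots> = h *\<^sub>R (\<Sum>i = 1..s. b i *\<^sub>R G' (Zs i) (g (Zs i)))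
                + (h^3 / 8) *\<^sub>R (\<Sum>i = 1..s. (b i)^3 *\<^sub>R G'' (g (Zs i)) (\<gamma> (Zs i)))"
    by (simp add: increment sum.distrib scaleR_sum_right)
  finally show ?thesis
    by (simp add: algebra_simps)
qed

end
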